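(* Let $\star$ be a $t$-definer, let $n\ge1$ and let $(X_1,d_1^\star),\dots,(X_n,d_n^\star)$ be nonempty $\star$-metric spaces, and let $X=\prod_{i=1}^n X_i$. For $x=(x_i)$, $y=(y_i)\in X$ define $d_T^\star(x,y)=d_1^\star(x_1,y_1)\star\cdots\star d_n^\star(x_n,y_n)$ and $d_{\max}^\star(x,y)=\max_{1\le i\le n}d_i^\star(x_i,y_i)$. Then: (1) $(X,d_T^\star)$ is complete if and only if every $(X_i,d_i^\star)$ is complete; (2) $(X,d_{\max}^\star)$ is complete if and only if every $(X_i,d_i^\star)$ is complete.
   Context: A $t$-definer is a function $\star:[0,\infty)\times[0,\infty)\to[0,\infty)$ such that for all $a,b,c\ge 0$: $a\star b=b\star a$; $a\star(b\star c)=(a\star b)\star c$; if $a\le b$ then $a\star c\le b\star c$; $a\star 0=a$; and $\star$ is continuous in its first variable with respect to the Euclidean topology. Given a nonempty set $Y$, a $\star$-metric on $Y$ is a function $\rho:Y\times Y\to[0,\infty)$ such that for all $x,y,z\in Y$: $\rho(x,y)=0$ iff $x=y$; $\rho(x,y)=\rho(y,x)$; and $\rho(x,y)\le \rho(x,z)\star \rho(z,y)$. Both $d_T^\star$ and $d_{\max}^\star$ are $\star$-metrics on $X$. In $(Y,\rho)$, a sequence $\{x_n\}$ is Cauchy if for every $\epsilon>0$ there is $k$ with $\rho(x_n,x_m)<\epsilon$ for all $m,n\ge k$; it converges to $x$ if for every $\epsilon>0$ there is $k$ with $\rho(x,x_n)<\epsilon$ for $n\ge k$; $(Y,\rho)$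 is complete if every Cauchy sequence converges to a point of $Y$. *)

theory Defs
  imports "HOL-Analysis.Analysis"
begin

text \<open>A t-definer: a binary operation on [0,\<infinity>), modelled as a real function
  whose axioms are required on nonnegative arguments.\<close>
definition t_definer :: "(real \<Rightarrow> real \<Rightarrow> real) \<Rightarrow> bool" where
  "t_definer s \<longleftrightarrow>
     (\<forall>a\<ge>0. \<forall>b\<ge>0. s a b \<ge> 0) \<and>
     (\<forall>a\<ge>0. \<forall>b\<ge>0. s a b = s b a) \<and>
     (\<forall>a\<ge>0. \<forall>b\<ge>0. \<forall>c\<ge>0. s a (s b c) = s (s a b) c) \<and>
     (\<forall>a\<ge>0. \<forall>b\<ge>0. \<forall>c\<ge>0. a \<le> b \<longrightarrow> s a c \<le> s b c) \<and>
     (\<forall>a\<ge>0. s a 0 = a) \<and>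
     (\<forall>b\<ge>0. continuous_on {0..} (\<lambda>a. s a b))"

definition star_metric :: "(real \<Rightarrow> real \<Rightarrow> real) \<Rightarrow> 'a set \<Rightarrow> ('a \<Rightarrow> 'a \<Rightarrow> real) \<Rightarrow> bool" where
  "star_metric s Y \<rho> \<longleftrightarrow>
     (\<forall>x\<in>Y. \<forall>y\<in>Y. \<rho> x y \<ge> 0) \<and>
     (\<forall>x\<in>Y. \<forall>y\<in>Y. \<rho> x y = 0 \<longleftrightarrow> x = y) \<and>
     (\<forall>x\<in>Y. \<forall>y\<in>Y. \<rho> x y = \<rho> y x) \<and>
     (\<forall>x\<in>Y. \<forall>y\<in>Y. \<forall>z\<in>Y. \<rho> x y \<le> s (\<rho> x z) (\<rho> z y))"

definition sm_cauchy :: "'a set \<Rightarrow> ('a \<Rightarrow> 'a \<Rightarrow> real) \<Rightarrow> (nat \<Rightarrow> 'a) \<Rightarrow> bool" where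
  "sm_cauchy Y \<rho> u \<longleftrightarrow> (\<forall>e>0. \<exists>k. \<forall>m\<ge>k. \<forall>n\<ge>k. \<rho> (u n) (u m) < e)"

definition sm_converges :: "'a set \<Rightarrow> ('a \<Rightarrow> 'a \<Rightarrow> real) \<Rightarrow> (nat \<Rightarrow> 'a) \<Rightarrow> 'a \<Rightarrow> bool" where
  "sm_converges Y \<rho> u x \<longleftrightarrow> (\<forall>e>0. \<exists>k. \<forall>n\<ge>k. \<rho> x (u n) < e)"

definition sm_complete :: "'a set \<Rightarrow> ('a \<Rightarrow> 'a \<Rightarrow> real) \<Rightarrow> bool" where
  "sm_complete Y \<rho> \<longleftrightarrow>
     (\<forall>u. (\<forall>n. u n \<in> Y) \<and> sm_cauchy Y \<rho> u \<longrightarrow> (\<exists>x\<in>Y. sm_converges Y \<rho> u x))"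

primrec tfold :: "(real \<Rightarrow> real \<Rightarrow> real) \<Rightarrow> (nat \<Rightarrow> real) \<Rightarrow> nat \<Rightarrow> real" where
  "tfold s f 0 = 0"
| "tfold s f (Suc k) = (if k = 0 then f 1 else s (tfold s f k) (f (Suc k)))"

definition dT :: "(real \<Rightarrow> real \<Rightarrow> real) \<Rightarrow> nat \<Rightarrow> (nat \<Rightarrow> 'a \<Rightarrow> 'a \<Rightarrow> real)
    \<Rightarrow> (nat \<Rightarrow> 'a) \<Rightarrow> (nat \<Rightarrow> 'a) \<Rightarrow> real" where
  "dT s n d x y = tfold s (\<lambda>i. d i (x i) (y i)) n"

definition dmax :: "nat \<Rightarrow> (nat \<Rightarrow> 'a \<Rightarrow> 'a \<Rightarrow> real) \<Rightarrow> (nat \<Rightarrow> 'a) \<Rightarrow> (nat \<Rightarrow> 'a) \<Rightarrow> real" where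
  "dmax n d x y = Max ((\<lambda>i. d i (x i) (y i)) ` {1..n})"

end

theory Submission
  imports Defs
begin

text \<open>Both product metrics dominate every coordinate distance, and both become small
  once all coordinate distances are small uniformly (for \<open>d\<^sub>T\<^sup>\<star>\<close> this is where continuity
  of \<open>\<star>\<close> at \<open>0\<close> enters). These two properties alone make Cauchy sequences and limits in
  the product exactly the coordinatewise ones; completeness of a factor is recovered from
  the product by freezing all other coordinates at a fixed point.\<close>

lemma t_definer_nonneg: "t_definer s \<Longrightarrow> a \<ge> 0 \<Longrightarrow> b \<ge> 0 \<Longrightarrow> s a b \<ge> 0"
  unfolding t_definer_def by simp

lemma t_definer_commute: "t_definer s \<Longrightarrow> a \<ge> 0 \<Longrightarrow> b \<ge> 0 \<Longrightarrow> s a b = s b a"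
  unfolding t_definer_def by simp

lemma t_definer_mono_left:
  "t_definer s \<Longrightarrow> 0 \<le> a \<Longrightarrow> a \<le> b \<Longrightarrow> c \<ge> 0 \<Longrightarrow> s a c \<le> s b c"
  unfolding t_definer_def by simp

lemma t_definer_zero_right: "t_definer s \<Longrightarrow> a \<ge> 0 \<Longrightarrow> s a 0 = a"
  unfolding t_definer_def by (elim conjE) fast

lemma t_definer_continuous_left: "t_definer s \<Longrightarrow> b \<ge> 0 \<Longrightarrow> continuous_on {0..} (\<lambda>a. s a b)"
  unfolding t_definer_def by simp

lemma t_definer_mono_right:
  assumes "t_definer s" "a \<ge> 0" "0 \<le> b" "b \<le> c"
  shows "s a b \<le> s a c"
proof -
  have "c \<ge> 0" using assms(3,4) by linarith
  have "s a b = s b a" by (rule t_definer_commute[OF assms(1-3)])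
  also have "\<dots> \<le> s c a" by (rule t_definer_mono_left[OF assms(1,3,4,2)])
  also have "\<dots> = s a c" by (rule t_definer_commute[OF assms(1) \<open>c \<ge> 0\<close> assms(2)])
  finally show ?thesis .
qed

lemma t_definer_ge_left:
  assumes "t_definer s" "a \<ge> 0" "b \<ge> 0"
  shows "a \<le> s a b"
  using t_definer_mono_right[OF assms(1,2) order_refl assms(3)] t_definer_zero_right[OF assms(1,2)]
  by simp

lemma t_definer_ge_right:
  assumes "t_definer s" "a \<ge> 0" "b \<ge> 0"
  shows "b \<le> s a b"
  using t_definer_ge_left[OF assms(1,3,2)] t_definer_commute[OF assms] by simp

text \<open>Smallness of \<open>a \<star> b\<close> near \<open>(0, 0)\<close> needs only continuity in the first variable:
  by monotonicity \<open>a \<star> b \<le> a \<star> \<epsilon>\<close>, and \<open>a \<star> \<epsilon> \<rightarrow> 0 \<star> \<epsilon> = \<epsilon>\<close> as \<open>a \<rightarrow> 0\<close>.\<close>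
lemma t_definer_small_near_zero:
  assumes "t_definer s" "e > 0"
  obtains \<delta> where "\<delta> > 0" "\<And>a b. 0 \<le> a \<Longrightarrow> a < \<delta> \<Longrightarrow> 0 \<le> b \<Longrightarrow> b < \<delta> \<Longrightarrow> s a b < e"
proof -
  define \<epsilon> where "\<epsilon> = e / 2"
  have "\<epsilon> > 0" using assms(2) by (simp add: \<epsilon>_def)
  have "s 0 \<epsilon> = \<epsilon>"
    using t_definer_commute[OF assms(1) order_refl, of \<epsilon>] t_definer_zero_right[OF assms(1), of \<epsilon>]
      \<open>\<epsilon> > 0\<close> by simp
  moreover have "continuous_on {0..} (\<lambda>a. s a \<epsilon>)"
    using t_definer_continuous_left[OF assms(1)] \<open>\<epsilon> > 0\<close> by simp
  ultimately obtain \<eta> where "\<eta> > 0" and \<eta>: "\<forall>a\<in>{0..}. dist a 0 < \<eta> \<longrightarrow> dist (s a \<epsilon>) \<epsilon> < \<epsilon>"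
    unfolding continuous_on_iff using \<open>\<epsilon> > 0\<close> by (metis atLeast_iff order_refl)
  show thesis
  proof
    show "min \<eta> \<epsilon> > 0" using \<open>\<eta> > 0\<close> \<open>\<epsilon> > 0\<close> by simp
  next
    fix a b :: real assume "0 \<le> a" "a < min \<eta> \<epsilon>" "0 \<le> b" "b < min \<eta> \<epsilon>"
    then have "s a b \<le> s a \<epsilon>" using t_definer_mono_right[OF assms(1)] by simp
    also have "\<dots> < e"
    proof -
      have "dist (s a \<epsilon>) \<epsilon> < \<epsilon>" using \<eta> \<open>0 \<le> a\<close> \<open>a < min \<eta> \<epsilon>\<close> by simp
      then show ?thesis unfolding dist_real_def \<epsilon>_def by linarith
    qed
    finally show "s a b < e" .
  qed
qed

lemma tfold_nonneg:
  assumes "t_definer s" "\<And>i. i \<in> {1..k} \<Longrightarrow> f i \<ge> 0"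
  shows "tfold s f k \<ge> 0"
  using assms(2) by (induction k) (auto intro: t_definer_nonneg[OF assms(1)])

lemma tfold_ge:
  assumes "t_definer s" "\<And>i. i \<in> {1..k} \<Longrightarrow> f i \<ge> 0" "i \<in> {1..k}"
  shows "f i \<le> tfold s f k"
  using assms(2,3)
proof (induction k)
  case 0
  then show ?case by simp
next
  case (Suc k)
  have nonneg: "tfold s f k \<ge> 0" "f (Suc k) \<ge> 0"
    using tfold_nonneg[OF assms(1)] Suc.prems(1) by auto
  consider "k = 0" | "k > 0" "i = Suc k" | "k > 0" "i \<in> {1..k}"
    using Suc.prems(2) by fastforce
  then show ?case
  proof cases
    case 1
    then show ?thesis using Suc.prems(2) by simp
  next
    case 2
    then show ?thesis using t_definer_ge_right[OF assms(1) nonneg] by simp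
  next
    case 3
    then have "f i \<le> tfold s f k" using Suc by simp
    also have "\<dots> \<le> tfold s f (Suc k)" using 3 t_definer_ge_left[OF assms(1) nonneg] by simp
    finally show ?thesis .
  qed
qed

lemma tfold_small_near_zero:
  assumes "t_definer s" "e > 0"
  obtains \<delta> where "\<delta> > 0" "\<And>f. (\<And>i. i \<in> {1..k} \<Longrightarrow> 0 \<le> f i \<and> f i < \<delta>) \<Longrightarrow> tfold s f k < e"
  using assms(2)
proof (induction k arbitrary: e thesis)
  case 0
  then show ?case by (metis tfold.simps(1))
next
  case (Suc k)
  obtain \<delta>\<^sub>1 where "\<delta>\<^sub>1 > 0" and \<delta>\<^sub>1: "\<And>a b. 0 \<le> a \<Longrightarrow> a < \<delta>\<^sub>1 \<Longrightarrow> 0 \<le> b \<Longrightarrow> b < \<delta>\<^sub>1 \<Longrightarrow> s a b < e"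
    using t_definer_small_near_zero[OF assms(1) Suc.prems(2)] by blast
  obtain \<delta>\<^sub>2 where "\<delta>\<^sub>2 > 0"
    and \<delta>\<^sub>2: "\<And>f. (\<And>i. i \<in> {1..k} \<Longrightarrow> 0 \<le> f i \<and> f i < \<delta>\<^sub>2) \<Longrightarrow> tfold s f k < \<delta>\<^sub>1"
    using Suc.IH[OF _ \<open>\<delta>\<^sub>1 > 0\<close>] by blast
  show ?case
  proof (rule Suc.prems(1))
    \<comment> \<open>the bound \<open>e\<close> is for \<open>k = 0\<close>, where \<open>tfold s f 1 = f 1\<close>\<close>
    show "min \<delta>\<^sub>1 (min \<delta>\<^sub>2 e) > 0" using \<open>\<delta>\<^sub>1 > 0\<close> \<open>\<delta>\<^sub>2 > 0\<close> Suc.prems(2) by simp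
  next
    fix f assume f: "\<And>i. i \<in> {1..Suc k} \<Longrightarrow> 0 \<le> f i \<and> f i < min \<delta>\<^sub>1 (min \<delta>\<^sub>2 e)"
    have "tfold s f k < \<delta>\<^sub>1" "tfold s f k \<ge> 0"
      using \<delta>\<^sub>2 tfold_nonneg[OF assms(1)] f by auto
    moreover have "0 \<le> f (Suc k)" "f (Suc k) < \<delta>\<^sub>1" "f 1 < e" using f[of "Suc k"] f[of 1] by auto
    ultimately show "tfold s f (Suc k) < e" using \<delta>\<^sub>1 by simp
  qed
qed

lemma sm_completeD:
  assumes "sm_complete Y \<rho>" "\<And>n. u n \<in> Y" "sm_cauchy Y \<rho> u"
  obtains x where "x \<in> Y" "sm_converges Y \<rho> u x"
  using assms unfolding sm_complete_def by blast

lemma sm_cauchy_eventually: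
  "sm_cauchy Y \<rho> u \<longleftrightarrow> (\<forall>e>0. \<forall>\<^sub>F (n, m) in sequentially \<times>\<^sub>F sequentially. \<rho> (u n) (u m) < e)"
  unfolding sm_cauchy_def eventually_prod_sequentially by simp

lemma sm_converges_eventually:
  "sm_converges Y \<rho> u x \<longleftrightarrow> (\<forall>e>0. \<forall>\<^sub>F n in sequentially. \<rho> x (u n) < e)"
  unfolding sm_converges_def eventually_sequentially by simp

locale coordinate_controlled =
  fixes I :: "'i set" and X :: "'i \<Rightarrow> 'a set" and d :: "'i \<Rightarrow> 'a \<Rightarrow> 'a \<Rightarrow> real"
    and D :: "('i \<Rightarrow> 'a) \<Rightarrow> ('i \<Rightarrow> 'a) \<Rightarrow> real"
  assumes finite_index: "finite I"
    and component_le: "\<And>x y i. x \<in> PiE I X \<Longrightarrow> y \<in> PiE I X \<Longrightarrow> i \<in> I \<Longrightarrow> d i (x i) (y i) \<le> D x y"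
    and small_components: "\<And>e. e > 0 \<Longrightarrow> \<exists>\<delta>>0. \<forall>x\<in>PiE I X. \<forall>y\<in>PiE I X.
                             (\<forall>i\<in>I. d i (x i) (y i) < \<delta>) \<longrightarrow> D x y < e"
begin

lemma cauchy_component:
  assumes "\<And>k. u k \<in> PiE I X" "sm_cauchy (PiE I X) D u" "i \<in> I"
  shows "sm_cauchy (X i) (d i) (\<lambda>k. u k i)"
  unfolding sm_cauchy_eventually
proof (intro allI impI)
  fix e :: real assume "e > 0"
  with assms(2) have "\<forall>\<^sub>F (n, m) in sequentially \<times>\<^sub>F sequentially. D (u n) (u m) < e"
    unfolding sm_cauchy_eventually by blast
  then show "\<forall>\<^sub>F (n, m) in sequentially \<times>\<^sub>F sequentially. d i (u n i) (u m i) < e"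
    by (rule eventually_mono) (auto intro: le_less_trans[OF component_le[OF assms(1,1,3)]])
qed

lemma converges_component:
  assumes "\<And>k. u k \<in> PiE I X" "x \<in> PiE I X" "sm_converges (PiE I X) D u x" "i \<in> I"
  shows "sm_converges (X i) (d i) (\<lambda>k. u k i) (x i)"
  unfolding sm_converges_eventually
proof (intro allI impI)
  fix e :: real assume "e > 0"
  with assms(3) have "\<forall>\<^sub>F n in sequentially. D x (u n) < e"
    unfolding sm_converges_eventually by blast
  then show "\<forall>\<^sub>F n in sequentially. d i (x i) (u n i) < e"
    by (rule eventually_mono) (rule le_less_trans[OF component_le[OF assms(2,1,4)]])
qed

lemma cauchy_of_components:
  assumes "\<And>k. u k \<in> PiE I X" "\<And>i. i \<in> I \<Longrightarrow> sm_cauchy (X i) (d i) (\<lambda>k. u k i)"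
  shows "sm_cauchy (PiE I X) D u"
  unfolding sm_cauchy_eventually split_beta'
proof (intro allI impI)
  fix e :: real assume "e > 0"
  then obtain \<delta> where "\<delta> > 0"
    and \<delta>: "\<forall>x\<in>PiE I X. \<forall>y\<in>PiE I X. (\<forall>i\<in>I. d i (x i) (y i) < \<delta>) \<longrightarrow> D x y < e"
    using small_components[OF \<open>e > 0\<close>] by blast
  have "\<forall>\<^sub>F p in sequentially \<times>\<^sub>F sequentially. \<forall>i\<in>I. d i (u (fst p) i) (u (snd p) i) < \<delta>"
    using assms(2) \<open>\<delta> > 0\<close>
    by (intro eventually_ball_finite[OF finite_index]) (simp add: sm_cauchy_eventually split_beta')
  then show "\<forall>\<^sub>F p in sequentially \<times>\<^sub>F sequentially. D (u (fst p)) (u (snd p)) < e"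
    by (rule eventually_mono) (use \<delta> assms(1) in blast)
qed

lemma converges_of_components:
  assumes "\<And>k. u k \<in> PiE I X" "x \<in> PiE I X"
    and "\<And>i. i \<in> I \<Longrightarrow> sm_converges (X i) (d i) (\<lambda>k. u k i) (x i)"
  shows "sm_converges (PiE I X) D u x"
  unfolding sm_converges_eventually
proof (intro allI impI)
  fix e :: real assume "e > 0"
  then obtain \<delta> where "\<delta> > 0"
    and \<delta>: "\<forall>x\<in>PiE I X. \<forall>y\<in>PiE I X. (\<forall>i\<in>I. d i (x i) (y i) < \<delta>) \<longrightarrow> D x y < e"
    using small_components[OF \<open>e > 0\<close>] by blast
  have "\<forall>\<^sub>F n in sequentially. \<forall>i\<in>I. d i (x i) (u n i) < \<delta>"
    using assms(3) \<open>\<delta> > 0\<close>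
    by (intro eventually_ball_finite[OF finite_index]) (simp add: sm_converges_eventually)
  then show "\<forall>\<^sub>F n in sequentially. D x (u n) < e"
    by (rule eventually_mono) (use \<delta> assms(1,2) in blast)
qed

lemma complete_of_complete_components:
  assumes "\<And>i. i \<in> I \<Longrightarrow> sm_complete (X i) (d i)"
  shows "sm_complete (PiE I X) D"
  unfolding sm_complete_def
proof (intro allI impI, elim conjE)
  fix u assume "\<forall>k. u k \<in> PiE I X" and cauchy: "sm_cauchy (PiE I X) D u"
  then have u: "\<And>k. u k \<in> PiE I X" by blast
  have "\<exists>z. z \<in> X i \<and> sm_converges (X i) (d i) (\<lambda>k. u k i) z" if i: "i \<in> I" for i
  proof -
    have "u k i \<in> X i" for k using PiE_mem[OF u i] .
    then obtain z where "z \<in> X i" "sm_converges (X i) (d i) (\<lambda>k. u k i) z"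
      by (rule sm_completeD[OF assms[OF i] _ cauchy_component[OF u cauchy i]])
    then show ?thesis by blast
  qed
  then obtain x where x: "\<And>i. i \<in> I \<Longrightarrow> x i \<in> X i \<and> sm_converges (X i) (d i) (\<lambda>k. u k i) (x i)"
    by metis
  have "restrict x I \<in> PiE I X" using x by simp
  moreover have "sm_converges (PiE I X) D u (restrict x I)"
    by (rule converges_of_components[OF u \<open>restrict x I \<in> PiE I X\<close>]) (simp add: x)
  ultimately show "\<exists>x\<in>PiE I X. sm_converges (PiE I X) D u x" by blast
qed

lemma complete_component:
  assumes "sm_complete (PiE I X) D" "i \<in> I"
    and nonempty: "\<And>j. j \<in> I \<Longrightarrow> X j \<noteq> {}"
    and zero: "\<And>j z. j \<in> I \<Longrightarrow> z \<in> X j \<Longrightarrow> d j z z = 0"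
  shows "sm_complete (X i) (d i)"
  unfolding sm_complete_def
proof (intro allI impI, elim conjE)
  fix v assume v: "\<forall>k. v k \<in> X i" and "sm_cauchy (X i) (d i) v"
  have "PiE I X \<noteq> {}" using nonempty by (simp add: PiE_eq_empty_iff)
  then obtain p where p: "p \<in> PiE I X" by blast
  define u where "u k = p(i := v k)" for k
  have u: "u k \<in> PiE I X" for k
    using p v \<open>i \<in> I\<close> unfolding u_def by (simp add: PiE_def Pi_def extensional_def)
  have "sm_cauchy (X j) (d j) (\<lambda>k. u k j)" if "j \<in> I" for j
  proof (cases "j = i")
    case False
    then show ?thesis using zero[OF that PiE_mem[OF p that]] by (simp add: u_def sm_cauchy_def)
  qed (use \<open>sm_cauchy (X i) (d i) v\<close> u_def in simp)
  then have "sm_cauchy (PiE I X) D u" by (rule cauchy_of_components[OF u])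
  then obtain x where x: "x \<in> PiE I X" "sm_converges (PiE I X) D u x"
    by (rule sm_completeD[OF assms(1) u])
  have "sm_converges (X i) (d i) v (x i)"
    using converges_component[OF u x \<open>i \<in> I\<close>] by (simp add: u_def)
  moreover have "x i \<in> X i" using PiE_mem[OF x(1) \<open>i \<in> I\<close>] .
  ultimately show "\<exists>x\<in>X i. sm_converges (X i) (d i) v x" by blast
qed

lemma complete_iff_complete_components:
  assumes "\<And>j. j \<in> I \<Longrightarrow> X j \<noteq> {}" "\<And>j z. j \<in> I \<Longrightarrow> z \<in> X j \<Longrightarrow> d j z z = 0"
  shows "sm_complete (PiE I X) D \<longleftrightarrow> (\<forall>i\<in>I. sm_complete (X i) (d i))"
proof
  show "sm_complete (PiE I X) D \<Longrightarrow> \<forall>i\<in>I. sm_complete (X i) (d i)"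
    using complete_component[OF _ _ assms] by blast
  show "\<forall>i\<in>I. sm_complete (X i) (d i) \<Longrightarrow> sm_complete (PiE I X) D"
    by (simp add: complete_of_complete_components)
qed

end

lemma star_metric_nonneg: "star_metric s Y \<rho> \<Longrightarrow> x \<in> Y \<Longrightarrow> y \<in> Y \<Longrightarrow> \<rho> x y \<ge> 0"
  unfolding star_metric_def by simp

lemma star_metric_self: "star_metric s Y \<rho> \<Longrightarrow> x \<in> Y \<Longrightarrow> \<rho> x x = 0"
  unfolding star_metric_def by simp

lemma coordinate_controlled_dT:
  assumes "t_definer s" "\<And>i. i \<in> {1..n} \<Longrightarrow> star_metric s (X i) (d i)"
  shows "coordinate_controlled {1..n} X d (dT s n d)"
proof
  have nonneg: "d i (x i) (y i) \<ge> 0" if "x \<in> PiE {1..n} X" "y \<in> PiE {1..n} X" "i \<in> {1..n}" for x y i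
    using star_metric_nonneg[OF assms(2)[OF that(3)] PiE_mem[OF that(1,3)] PiE_mem[OF that(2,3)]] .
  show "d i (x i) (y i) \<le> dT s n d x y"
    if "x \<in> PiE {1..n} X" "y \<in> PiE {1..n} X" "i \<in> {1..n}" for x y i
    unfolding dT_def by (rule tfold_ge[OF assms(1) _ that(3)]) (rule nonneg[OF that(1,2)])
  show "\<exists>\<delta>>0. \<forall>x\<in>PiE {1..n} X. \<forall>y\<in>PiE {1..n} X.
          (\<forall>i\<in>{1..n}. d i (x i) (y i) < \<delta>) \<longrightarrow> dT s n d x y < e" if "e > 0" for e
  proof -
    obtain \<delta> where "\<delta> > 0"
      and \<delta>: "\<And>f. (\<And>i. i \<in> {1..n} \<Longrightarrow> 0 \<le> f i \<and> f i < \<delta>) \<Longrightarrow> tfold s f n < e"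
      by (rule tfold_small_near_zero[OF assms(1) \<open>e > 0\<close>, where k = n]) blast
    have "dT s n d x y < e"
      if "x \<in> PiE {1..n} X" "y \<in> PiE {1..n} X" "\<forall>i\<in>{1..n}. d i (x i) (y i) < \<delta>" for x y
      unfolding dT_def by (rule \<delta>) (simp add: nonneg[OF that(1,2)] that(3))
    then show ?thesis using \<open>\<delta> > 0\<close> by blast
  qed
qed simp

lemma coordinate_controlled_dmax:
  assumes "n \<ge> 1"
  shows "coordinate_controlled {1..n} X d (dmax n d)"
proof
  show "d i (x i) (y i) \<le> dmax n d x y" if "i \<in> {1..n}" for x y i
    unfolding dmax_def using that by (intro Max_ge) auto
  show "\<exists>\<delta>>0. \<forall>x\<in>PiE {1..n} X. \<forall>y\<in>PiE {1..n} X.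
          (\<forall>i\<in>{1..n}. d i (x i) (y i) < \<delta>) \<longrightarrow> dmax n d x y < e" if "e > 0" for e
    unfolding dmax_def using assms that by (intro exI[of _ e]) auto
qed simp

theorem theorem4p12:
  fixes s :: "real \<Rightarrow> real \<Rightarrow> real" and n :: nat
    and X :: "nat \<Rightarrow> 'a set" and d :: "nat \<Rightarrow> 'a \<Rightarrow> 'a \<Rightarrow> real"
  assumes "t_definer s" and "n \<ge> 1"
    and "\<And>i. i \<in> {1..n} \<Longrightarrow> X i \<noteq> {}"
    and "\<And>i. i \<in> {1..n} \<Longrightarrow> star_metric s (X i) (d i)"
  shows "(sm_complete (PiE {1..n} X) (dT s n d) \<longleftrightarrow> (\<forall>i\<in>{1..n}. sm_complete (X i) (d i)))
     \<and> (sm_complete (PiE {1..n} X) (dmax n d) \<longleftrightarrow> (\<forall>i\<in>{1..n}. sm_complete (X i) (d i)))"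
proof -
  interpret dT: coordinate_controlled "{1..n}" X d "dT s n d"
    by (rule coordinate_controlled_dT[OF assms(1,4)])
  interpret dmax: coordinate_controlled "{1..n}" X d "dmax n d"
    by (rule coordinate_controlled_dmax[OF assms(2)])
  have zero: "d j z z = 0" if "j \<in> {1..n}" "z \<in> X j" for j z
    using star_metric_self[OF assms(4)[OF that(1)] that(2)] .
  show ?thesis
    using dT.complete_iff_complete_components[OF assms(3) zero]
      dmax.complete_iff_complete_components[OF assms(3) zero]
    by blast
qed

end
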